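(* Let $n_1,n_2,n_3,n_4,k_1,k_2$ be six pairwise distinct positive integers. Then the $4\times 4$ real matrix whose $i$-th row ($i=1,2,3,4$) is $$\Big(\frac{1}{n_i^2},\ \frac{1}{n_i},\ \frac{1}{n_i-k_1}+\frac{1}{n_i+k_1},\ \frac{1}{n_i-k_2}+\frac{1}{n_i+k_2}\Big)$$ is nonsingular (has full rank). *)

theory Defs
  imports "HOL-Analysis.Analysis"
begin

definition lemma3_row :: "nat \<Rightarrow> nat \<Rightarrow> nat \<Rightarrow> real ^ 4" where
  "lemma3_row k1 k2 n = vector
     [1 / (real n)^2,
      1 / real n,
      1 / (real n - real k1) + 1 / (real n + real k1),
      1 / (real n - real k2) + 1 / (real n + real k2)]"

definition lemma3_matrix :: "nat \<Rightarrow> nat \<Rightarrow> nat \<Rightarrow> nat \<Rightarrow> nat \<Rightarrow> nat \<Rightarrow> real ^ 4 ^ 4" where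
  "lemma3_matrix n1 n2 n3 n4 k1 k2 =
     vector [lemma3_row k1 k2 n1, lemma3_row k1 k2 n2, lemma3_row k1 k2 n3, lemma3_row k1 k2 n4]"

end

theory Submission
  imports Defs "HOL-Computational_Algebra.Polynomial"
begin

text \<open>A vanishing combination of the columns with coefficients a, b, c, d becomes, after
  multiplication by x^2 (x^2 - k1^2) (x^2 - k2^2), a quintic P with the four roots n1, ..., n4, so
  P = (\<alpha> x + \<beta>) R with R = (x - n1) ... (x - n4). The even part of P is
  2 a (x^2 - k1^2) (x^2 - k2^2), which vanishes at x = k1, k2; writing
  R = x^4 - e1 x^3 + e2 x^2 - e3 x + e4, this gives two linear equations in \<alpha>, \<beta> whose determinant
  is nonzero because the n_i are positive (the key inequality is e3 < e1 e2). Hence P = 0, and the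
  values of P at 0, k1, k2 and k1 + k2 force a = b = c = d = 0.\<close>

lemma vector_4_nth [simp]:
  "(vector [x, y, z, w] :: 'a::zero ^ 4) $ 1 = x"
  "(vector [x, y, z, w] :: 'a::zero ^ 4) $ 2 = y"
  "(vector [x, y, z, w] :: 'a::zero ^ 4) $ 3 = z"
  "(vector [x, y, z, w] :: 'a::zero ^ 4) $ 4 = w"
  unfolding vector_def by simp_all

definition row_numerator :: "real \<Rightarrow> real \<Rightarrow> real \<Rightarrow> real \<Rightarrow> real \<Rightarrow> real \<Rightarrow> real \<Rightarrow> real" where
  "row_numerator a b c d k1 k2 x =
     a * (x\<^sup>2 - k1\<^sup>2) * (x\<^sup>2 - k2\<^sup>2) + b * x * (x\<^sup>2 - k1\<^sup>2) * (x\<^sup>2 - k2\<^sup>2)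
     + 2 * c * x ^ 3 * (x\<^sup>2 - k2\<^sup>2) + 2 * d * x ^ 3 * (x\<^sup>2 - k1\<^sup>2)"

lemma inverse_sum_conjugates:
  fixes x k :: real
  assumes "x\<^sup>2 \<noteq> k\<^sup>2"
  shows "1 / (x - k) + 1 / (x + k) = 2 * x / (x\<^sup>2 - k\<^sup>2)"
proof -
  have square_diff: "x\<^sup>2 - k\<^sup>2 = (x - k) * (x + k)"
    by (simp add: algebra_simps power2_eq_square)
  with assms have "x - k \<noteq> 0" "x + k \<noteq> 0" by auto
  with square_diff show ?thesis by (simp add: field_simps)
qed

lemma row_numerator_eq:
  fixes x k1 k2 :: real
  assumes "x \<noteq> 0" "x\<^sup>2 \<noteq> k1\<^sup>2" "x\<^sup>2 \<noteq> k2\<^sup>2"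
  shows "row_numerator a b c d k1 k2 x =
    x\<^sup>2 * (x\<^sup>2 - k1\<^sup>2) * (x\<^sup>2 - k2\<^sup>2) *
    (a * (1 / x\<^sup>2) + b * (1 / x) + c * (1 / (x - k1) + 1 / (x + k1)) + d * (1 / (x - k2) + 1 / (x + k2)))"
proof -
  have clear: "x\<^sup>2 * A * B * (a * (1 / x\<^sup>2) + b * (1 / x) + c * (2 * x / A) + d * (2 * x / B))
      = a * A * B + b * x * A * B + 2 * c * x ^ 3 * B + 2 * d * x ^ 3 * A"
    if "A \<noteq> 0" "B \<noteq> 0" for A B
    using that assms(1) by (simp add: field_simps eval_nat_numeral)
  show ?thesis
    using assms clear[of "x\<^sup>2 - k1\<^sup>2" "x\<^sup>2 - k2\<^sup>2"]
    by (simp add: row_numerator_def inverse_sum_conjugates)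
qed

lemma poly_eq_0_if_card_roots_gt_degree:
  fixes p :: "'a::idom poly"
  assumes "finite A" "degree p < card A" "\<And>x. x \<in> A \<Longrightarrow> poly p x = 0"
  shows "p = 0"
proof (rule ccontr)
  assume "p \<noteq> 0"
  then have "card A \<le> card {x. poly p x = 0}"
    using assms(3) by (intro card_mono poly_roots_finite) auto
  also have "\<dots> \<le> degree p" using \<open>p \<noteq> 0\<close> by (rule card_poly_roots_bound)
  finally show False using assms(2) by simp
qed

lemma quintic_factor_through_four_roots:
  fixes p0 p1 p2 p3 p4 p5 x1 x2 x3 x4 :: real
  assumes "distinct [x1, x2, x3, x4]"
    and "\<And>x. x \<in> {x1, x2, x3, x4} \<Longrightarrow> p0 + p1 * x + p2 * x\<^sup>2 + p3 * x ^ 3 + p4 * x ^ 4 + p5 * x ^ 5 = 0"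
  obtains \<alpha> \<beta> where "\<And>x. p0 + p1 * x + p2 * x\<^sup>2 + p3 * x ^ 3 + p4 * x ^ 4 + p5 * x ^ 5
      = (\<alpha> * x + \<beta>) * ((x - x1) * (x - x2) * (x - x3) * (x - x4))"
proof -
  define e1 e2 e3 e4 where
    "e1 = x1 + x2 + x3 + x4" and
    "e2 = x1 * x2 + x1 * x3 + x1 * x4 + x2 * x3 + x2 * x4 + x3 * x4" and
    "e3 = x1 * x2 * x3 + x1 * x2 * x4 + x1 * x3 * x4 + x2 * x3 * x4" and
    "e4 = x1 * x2 * x3 * x4"
  define \<alpha> \<beta> where "\<alpha> = p5" and "\<beta> = p4 + p5 * e1"
  define r where "r = [:p0 - \<beta> * e4, p1 - \<alpha> * e4 + \<beta> * e3, p2 - \<beta> * e2 + \<alpha> * e3,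
    p3 - \<alpha> * e2 + \<beta> * e1:]"
  have remainder: "p0 + p1 * x + p2 * x\<^sup>2 + p3 * x ^ 3 + p4 * x ^ 4 + p5 * x ^ 5
      = (\<alpha> * x + \<beta>) * ((x - x1) * (x - x2) * (x - x3) * (x - x4)) + poly r x" for x
    unfolding r_def \<alpha>_def \<beta>_def e1_def e2_def e3_def e4_def
    by (simp add: algebra_simps eval_nat_numeral)
  have "r = 0"
  proof (rule poly_eq_0_if_card_roots_gt_degree)
    show "degree r < card {x1, x2, x3, x4}"
      using distinct_card[OF assms(1)] unfolding r_def
      by (simp add: order.strict_trans1[OF degree_pCons_le])
    show "poly r x = 0" if "x \<in> {x1, x2, x3, x4}" for x
      using remainder[of x] assms(2)[OF that] that by auto
  qed simp
  with remainder show thesis by (intro that[of \<alpha> \<beta>]) simp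
qed

lemma elementary_symmetric_e3_less_e1_e2:
  fixes x1 x2 x3 x4 :: real
  assumes "0 < x1" "0 < x2" "0 < x3" "0 < x4"
  shows "x1 * x2 * x3 + x1 * x2 * x4 + x1 * x3 * x4 + x2 * x3 * x4
    < (x1 + x2 + x3 + x4) * (x1 * x2 + x1 * x3 + x1 * x4 + x2 * x3 + x2 * x4 + x3 * x4)"
proof -
  have "0 < x1 * x1 * (x2 + x3 + x4) + x2 * x2 * (x1 + x3 + x4) + x3 * x3 * (x1 + x2 + x4)
      + x4 * x4 * (x1 + x2 + x3) + 2 * (x1 * x2 * x3 + x1 * x2 * x4 + x1 * x3 * x4 + x2 * x3 * x4)"
    using assms by (intro add_pos_pos mult_pos_pos) auto
  then show ?thesis by (simp add: algebra_simps)
qed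

lemma two_positive_points_system_eq_0:
  fixes \<alpha> \<beta> e1 e2 e3 e4 y1 y2 :: real
  assumes "0 < e1" "0 < e3" "0 < e4" "e3 < e1 * e2"
    and "0 < y1" "0 < y2" "y1 \<noteq> y2"
    and "\<And>y. y \<in> {y1, y2} \<Longrightarrow> \<beta> * (y\<^sup>2 + e2 * y + e4) = \<alpha> * y * (e1 * y + e3)"
  shows "\<alpha> = 0" "\<beta> = 0"
proof -
  define D where "D y = y\<^sup>2 + e2 * y + e4" for y
  have "0 < e2" using assms(1,2,4) by (metis mult_pos_pos order.strict_trans not_le zero_less_mult_pos)
  then have D_pos: "0 < D y" if "0 < y" for y
    using that assms(3) unfolding D_def by (intro add_pos_pos) auto
  have "\<alpha> * (y1 * (e1 * y1 + e3) * D y2 - y2 * (e1 * y2 + e3) * D y1)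
      = (\<alpha> * y1 * (e1 * y1 + e3)) * D y2 - (\<alpha> * y2 * (e1 * y2 + e3)) * D y1"
    by (simp add: algebra_simps)
  also have "\<dots> = \<beta> * D y1 * D y2 - \<beta> * D y2 * D y1"
    using assms(8) by (simp add: D_def)
  also have "\<dots> = 0" by simp
  finally have "\<alpha> * (y1 * (e1 * y1 + e3) * D y2 - y2 * (e1 * y2 + e3) * D y1) = 0" .
  moreover have "y1 * (e1 * y1 + e3) * D y2 - y2 * (e1 * y2 + e3) * D y1
      = (y1 - y2) * ((e1 * e2 - e3) * y1 * y2 + e1 * e4 * (y1 + y2) + e3 * e4)"
    unfolding D_def by (simp add: algebra_simps power2_eq_square)
  moreover have "0 < (e1 * e2 - e3) * y1 * y2 + e1 * e4 * (y1 + y2) + e3 * e4"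
    using assms by (intro add_pos_pos mult_pos_pos) auto
  ultimately show "\<alpha> = 0" using assms(7) by simp
  with assms(8)[of y1] D_pos[OF assms(5)] show "\<beta> = 0" by (simp add: D_def)
qed

lemma row_numerator_even_part:
  "row_numerator a b c d k1 k2 x + row_numerator a b c d k1 k2 (- x) = 2 * a * (x\<^sup>2 - k1\<^sup>2) * (x\<^sup>2 - k2\<^sup>2)"
  unfolding row_numerator_def by (simp add: algebra_simps)

lemma row_numerator_eq_0_if_four_positive_roots:
  fixes x1 x2 x3 x4 k1 k2 :: real
  assumes "0 < x1" "0 < x2" "0 < x3" "0 < x4" "distinct [x1, x2, x3, x4]"
    and "0 < k1" "0 < k2" "k1 \<noteq> k2"
    and roots: "\<And>x. x \<in> {x1, x2, x3, x4} \<Longrightarrow> row_numerator a b c d k1 k2 x = 0"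
  shows "row_numerator a b c d k1 k2 x = 0"
proof -
  have quintic: "row_numerator a b c d k1 k2 x = a * k1\<^sup>2 * k2\<^sup>2 + b * k1\<^sup>2 * k2\<^sup>2 * x
      + - a * (k1\<^sup>2 + k2\<^sup>2) * x\<^sup>2 + - (b * (k1\<^sup>2 + k2\<^sup>2) + 2 * c * k2\<^sup>2 + 2 * d * k1\<^sup>2) * x ^ 3
      + a * x ^ 4 + (b + 2 * c + 2 * d) * x ^ 5" for x
    unfolding row_numerator_def by (simp add: algebra_simps eval_nat_numeral)
  define R where "R x = (x - x1) * (x - x2) * (x - x3) * (x - x4)" for x
  obtain \<alpha> \<beta> where factor: "\<And>x. row_numerator a b c d k1 k2 x = (\<alpha> * x + \<beta>) * R x"
    using quintic_factor_through_four_roots[OF assms(5)] roots unfolding quintic R_def by blast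
  define e1 e2 e3 e4 where
    "e1 = x1 + x2 + x3 + x4" and
    "e2 = x1 * x2 + x1 * x3 + x1 * x4 + x2 * x3 + x2 * x4 + x3 * x4" and
    "e3 = x1 * x2 * x3 + x1 * x2 * x4 + x1 * x3 * x4 + x2 * x3 * x4" and
    "e4 = x1 * x2 * x3 * x4"
  have R_expand: "R x = x ^ 4 - e1 * x ^ 3 + e2 * x\<^sup>2 - e3 * x + e4" for x
    unfolding R_def e1_def e2_def e3_def e4_def by (simp add: algebra_simps eval_nat_numeral)
  have even_part: "\<beta> * ((k\<^sup>2)\<^sup>2 + e2 * k\<^sup>2 + e4) = \<alpha> * k\<^sup>2 * (e1 * k\<^sup>2 + e3)" if "k \<in> {k1, k2}" for k
  proof -
    have "0 = row_numerator a b c d k1 k2 k + row_numerator a b c d k1 k2 (- k)"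
      using that by (auto simp: row_numerator_even_part)
    also have "\<dots> = 2 * (\<beta> * ((k\<^sup>2)\<^sup>2 + e2 * k\<^sup>2 + e4) - \<alpha> * k\<^sup>2 * (e1 * k\<^sup>2 + e3))"
      unfolding factor R_expand by (simp add: algebra_simps eval_nat_numeral)
    finally show ?thesis by simp
  qed
  have "0 < e1" "0 < e3" "0 < e4"
    using assms(1-4) unfolding e1_def e3_def e4_def by (auto intro!: add_pos_pos mult_pos_pos)
  moreover have "e3 < e1 * e2"
    unfolding e1_def e2_def e3_def using elementary_symmetric_e3_less_e1_e2 assms(1-4) .
  moreover have "0 < k1\<^sup>2" "0 < k2\<^sup>2" using assms(6,7) by simp_all
  moreover have "k1\<^sup>2 \<noteq> k2\<^sup>2" using assms(6-8) by (auto simp: power2_eq_iff)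
  moreover have "\<beta> * (y\<^sup>2 + e2 * y + e4) = \<alpha> * y * (e1 * y + e3)" if "y \<in> {k1\<^sup>2, k2\<^sup>2}" for y
    using that even_part by auto
  ultimately have "\<alpha> = 0" "\<beta> = 0" by (fact two_positive_points_system_eq_0)+
  then show ?thesis by (simp add: factor)
qed

lemma row_numerator_coefficients_eq_0:
  fixes k1 k2 :: real
  assumes "0 < k1" "0 < k2" "k1 \<noteq> k2"
    and "\<And>x. row_numerator a b c d k1 k2 x = 0"
  shows "a = 0" "b = 0" "c = 0" "d = 0"
proof -
  have "k1\<^sup>2 \<noteq> k2\<^sup>2" using assms(1-3) by (auto simp: power2_eq_iff)
  moreover have "row_numerator a b c d k1 k2 0 = a * k1\<^sup>2 * k2\<^sup>2"
    "row_numerator a b c d k1 k2 k1 = 2 * c * k1 ^ 3 * (k1\<^sup>2 - k2\<^sup>2)"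
    "row_numerator a b c d k1 k2 k2 = 2 * d * k2 ^ 3 * (k2\<^sup>2 - k1\<^sup>2)"
    unfolding row_numerator_def by (simp_all add: algebra_simps)
  ultimately show acd: "a = 0" "c = 0" "d = 0" using assms by auto
  have "row_numerator 0 b 0 0 k1 k2 (k1 + k2) = b * (k1 + k2) * (k2 * (2 * k1 + k2)) * (k1 * (k1 + 2 * k2))"
    unfolding row_numerator_def by (simp add: algebra_simps power2_eq_square)
  with assms(1,2) assms(4)[of "k1 + k2"] show "b = 0" unfolding acd by simp
qed

lemma row_combination_coefficients_eq_0:
  fixes a b c d x1 x2 x3 x4 k1 k2 :: real
  assumes "0 < x1" "0 < x2" "0 < x3" "0 < x4" "0 < k1" "0 < k2"
    and "distinct [x1, x2, x3, x4, k1, k2]"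
    and combination: "\<And>x. x \<in> {x1, x2, x3, x4} \<Longrightarrow>
      a * (1 / x\<^sup>2) + b * (1 / x) + c * (1 / (x - k1) + 1 / (x + k1)) + d * (1 / (x - k2) + 1 / (x + k2)) = 0"
  shows "a = 0 \<and> b = 0 \<and> c = 0 \<and> d = 0"
proof -
  have roots: "row_numerator a b c d k1 k2 x = 0" if "x \<in> {x1, x2, x3, x4}" for x
  proof -
    from that assms(1-7) have "0 < x" "x \<noteq> k1" "x \<noteq> k2" by auto
    with assms(5,6) have "x \<noteq> 0" "x\<^sup>2 \<noteq> k1\<^sup>2" "x\<^sup>2 \<noteq> k2\<^sup>2" by (auto simp: power2_eq_iff)
    then show ?thesis using row_numerator_eq combination[OF that] by simp
  qed
  have "distinct [x1, x2, x3, x4]" "k1 \<noteq> k2" using assms(7) by auto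
  then have "row_numerator a b c d k1 k2 x = 0" for x
    using row_numerator_eq_0_if_four_positive_roots[OF assms(1-4) _ assms(5,6) _ roots] by blast
  then show ?thesis using row_numerator_coefficients_eq_0[OF assms(5,6) \<open>k1 \<noteq> k2\<close>] by blast
qed

lemma lemma3_matrix_kernel_row:
  assumes "lemma3_matrix n1 n2 n3 n4 k1 k2 *v v = 0" "n \<in> {n1, n2, n3, n4}"
  shows "v $ 1 * (1 / (real n)\<^sup>2) + v $ 2 * (1 / real n)
    + v $ 3 * (1 / (real n - real k1) + 1 / (real n + real k1))
    + v $ 4 * (1 / (real n - real k2) + 1 / (real n + real k2)) = 0"
proof -
  have "(lemma3_matrix n1 n2 n3 n4 k1 k2 *v v) $ i = 0" for i
    using assms(1) by simp
  from this[of 1] this[of 2] this[of 3] this[of 4] assms(2)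
  have "(\<Sum>j\<in>UNIV. lemma3_row k1 k2 n $ j * v $ j) = 0"
    by (auto simp: matrix_vector_mult_def lemma3_matrix_def)
  then show ?thesis by (simp add: sum_4 lemma3_row_def mult.commute)
qed

theorem lemma3:
  fixes n1 n2 n3 n4 k1 k2 :: nat
  assumes "0 < n1" "0 < n2" "0 < n3" "0 < n4" "0 < k1" "0 < k2"
    and "distinct [n1, n2, n3, n4, k1, k2]"
  shows "invertible (lemma3_matrix n1 n2 n3 n4 k1 k2)"
proof -
  have "v = 0" if kernel: "lemma3_matrix n1 n2 n3 n4 k1 k2 *v v = 0" for v :: "real ^ 4"
  proof -
    have "v $ 1 = 0 \<and> v $ 2 = 0 \<and> v $ 3 = 0 \<and> v $ 4 = 0"
    proof (rule row_combination_coefficients_eq_0)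
      show "distinct [real n1, real n2, real n3, real n4, real k1, real k2]"
        using assms(7) by simp
      fix x
      assume "x \<in> {real n1, real n2, real n3, real n4}"
      then obtain n where "n \<in> {n1, n2, n3, n4}" "x = real n" by blast
      with lemma3_matrix_kernel_row[OF kernel]
      show "v $ 1 * (1 / x\<^sup>2) + v $ 2 * (1 / x) + v $ 3 * (1 / (x - real k1) + 1 / (x + real k1))
          + v $ 4 * (1 / (x - real k2) + 1 / (x + real k2)) = 0" by blast
    qed (use assms in simp_all)
    then show ?thesis by (simp add: vec_eq_iff forall_4)
  qed
  then show ?thesis by (simp add: invertible_left_inverse matrix_left_invertible_ker)
qed

end
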